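(* Let $n\ge 1$, let $K,T\in\mathcal S_n\setminus\{\emptyset,\mathbb R^n\}$ and let $\lambda\in(0,1)$. Then $(1-\lambda)K+\lambda T\in\mathcal S_n$ and \[ \big((1-\lambda)K+\lambda T\big)^c=(1-\lambda)K^c+\lambda T^c, \] where $+$ denotes Minkowski addition.
   Context: $B(x,r)=\{y\in\mathbb R^n:\|y-x\|_2\le r\}$ is the closed Euclidean ball. For $A\subseteq\mathbb R^n$, its $c$-dual is $A^c=\{y:\|x-y\|_2\le 1\ \forall x\in A\}=\bigcap_{x\in A}B(x,1)$ (with $\emptyset^c=\mathbb R^n$). $\mathcal S_n$ (ball-bodies) is the class of all sets of the form $\bigcap_{x\in A}B(x,1)$ for some $A\subseteq\mathbb R^n$, i.e. the image of the map $A\mapsto A^c$; it contains $\emptyset$ and $\mathbb R^n$. *)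

theory Defs
  imports "HOL-Analysis.Analysis"
begin

definition cdual :: "'a::euclidean_space set \<Rightarrow> 'a set" where
  "cdual A = {y. \<forall>x\<in>A. dist x y \<le> 1}"

definition ball_bodies :: "'a::euclidean_space set set" where
  "ball_bodies = range cdual"

definition mink_sum :: "'a::real_vector set \<Rightarrow> 'a set \<Rightarrow> 'a set" where
  "mink_sum A B = {a + b | a b. a \<in> A \<and> b \<in> B}"

definition scale_set :: "real \<Rightarrow> 'a::real_vector set \<Rightarrow> 'a set" where
  "scale_set c A = (\<lambda>x. c *\<^sub>R x) ` A"

end

theory Submission
  imports Defs
begin

text \<open>
  The inclusion \<open>\<supseteq>\<close> is the triangle inequality. For \<open>\<subseteq>\<close>, separate a point \<open>z\<close> outside the
  compact convex set \<open>(1 - \<lambda>) K\<^sup>c + \<lambda> T\<^sup>c\<close> by a unit vector \<open>u\<close>, and let \<open>y\<^sub>1\<close>, \<open>y\<^sub>2\<close> minimise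
  \<open>\<langle>u, \<cdot>\<rangle>\<close> on \<open>K\<^sup>c\<close>, \<open>T\<^sup>c\<close>. A ball body is supported at every support point by a unit ball,
  so \<open>K\<^sup>c \<subseteq> B(y\<^sub>1 + u, 1)\<close>, i.e. \<open>y\<^sub>1 + u \<in> K\<^sup>c\<^sup>c = K\<close>, and likewise \<open>y\<^sub>2 + u \<in> T\<close>. Their
  \<open>\<lambda>\<close>-combination lies in \<open>(1 - \<lambda>) K + \<lambda> T\<close> but at distance more than \<open>1\<close> from \<open>z\<close>.
  The same identity applied to \<open>K\<^sup>c\<close> and \<open>T\<^sup>c\<close> exhibits \<open>(1 - \<lambda>) K + \<lambda> T\<close> as the dual
  of \<open>(1 - \<lambda>) K\<^sup>c + \<lambda> T\<^sup>c\<close>, hence as a ball body.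
\<close>

lemma cdual_eq_Inter_cball: "cdual A = (\<Inter>a\<in>A. cball a 1)"
  by (auto simp: cdual_def)

lemma convex_cdual: "convex (cdual A)"
  unfolding cdual_eq_Inter_cball by (intro convex_INT convex_cball)

lemma compact_cdual:
  assumes "A \<noteq> {}"
  shows "compact (cdual A)"
proof -
  obtain a where "a \<in> A" using assms by blast
  then have "cdual A \<subseteq> cball a 1" by (auto simp: cdual_def)
  then have "bounded (cdual A)" using bounded_subset bounded_cball by blast
  moreover have "closed (cdual A)"
    unfolding cdual_eq_Inter_cball by (intro closed_INT ballI closed_cball)
  ultimately show ?thesis using compact_eq_bounded_closed by blast
qed

lemma cdual_antimono: "A \<subseteq> B \<Longrightarrow> cdual B \<subseteq> cdual A"
  by (auto simp: cdual_def)

lemma subset_cdual_cdual: "A \<subseteq> cdual (cdual A)"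
  by (auto simp: cdual_def dist_commute)

lemma cdual_in_ball_bodies: "cdual A \<in> ball_bodies"
  by (simp add: ball_bodies_def)

lemma cdual_cdual_ball_body:
  assumes "K \<in> ball_bodies"
  shows "cdual (cdual K) = K"
proof -
  obtain A where "K = cdual A" using assms unfolding ball_bodies_def by blast
  then show ?thesis
    by (metis cdual_antimono subset_cdual_cdual subset_antisym)
qed

lemma cdual_ball_body_nonempty:
  assumes "K \<in> ball_bodies" "K \<noteq> UNIV"
  shows "cdual K \<noteq> {}"
  using assms cdual_cdual_ball_body[OF assms(1)] by (auto simp: cdual_def)

lemma mem_cdual_iff_subset_cball: "p \<in> cdual C \<longleftrightarrow> C \<subseteq> cball p 1"
  by (auto simp: cdual_def dist_commute)

lemma norm_convex_combination_sq:
  fixes e f :: "'a::real_inner"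
  shows "(norm ((1 - t) *\<^sub>R e + t *\<^sub>R f))\<^sup>2
    = (1 - t) * (norm e)\<^sup>2 + t * (norm f)\<^sup>2 - t * (1 - t) * (norm (f - e))\<^sup>2"
  unfolding power2_norm_eq_inner
  by (simp add: inner_commute[of f e] algebra_simps)

lemma norm_convex_combination_minus_sq_le:
  fixes e f u :: "'a::real_inner"
  assumes "norm e \<le> 1" "norm f \<le> 1" "norm u = 1" "0 \<le> t" "t \<le> 1" "0 \<le> c"
  shows "(norm ((1 - t) *\<^sub>R e + t *\<^sub>R f - c *\<^sub>R u))\<^sup>2
    \<le> 1 - t * (1 - t) * (norm (f - e))\<^sup>2 + 2 * c + c\<^sup>2"
proof -
  define P where "P = (1 - t) *\<^sub>R e + t *\<^sub>R f"
  have "inner u u = 1"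
    using assms(3) by (simp add: power2_norm_eq_inner[symmetric])
  then have expand: "(norm (P - c *\<^sub>R u))\<^sup>2 = (norm P)\<^sup>2 - 2 * c * inner u P + c\<^sup>2"
    unfolding power2_norm_eq_inner by (simp add: inner_commute[of P u] power2_eq_square algebra_simps)
  have "norm P \<le> (1 - t) * norm e + t * norm f"
    unfolding P_def using norm_triangle_ineq[of "(1 - t) *\<^sub>R e" "t *\<^sub>R f"] assms by simp
  also have "\<dots> \<le> 1"
    using assms by (intro convex_bound_le) auto
  finally have "\<bar>inner u P\<bar> \<le> 1"
    using Cauchy_Schwarz_ineq2[of u P] assms(3) by simp
  then have "2 * c * (- inner u P) \<le> 2 * c * 1"
    using assms(6) by (intro mult_left_mono) auto
  moreover have "(1 - t) * (norm e)\<^sup>2 + t * (norm f)\<^sup>2 \<le> 1"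
    using assms by (intro convex_bound_le) (simp_all add: power_le_one)
  then have "(norm P)\<^sup>2 \<le> 1 - t * (1 - t) * (norm (f - e))\<^sup>2"
    unfolding P_def norm_convex_combination_sq by linarith
  ultimately show ?thesis
    unfolding P_def[symmetric] expand by linarith
qed

lemma exists_step_below_quadratic:
  fixes w D :: real
  assumes "0 \<le> w" "2 * w < D"
  obtains t c where "0 < t" "t < 1" "t * w < c" "2 * c + c\<^sup>2 \<le> t * (1 - t) * D"
proof -
  \<comment> \<open>\<open>c = t s\<close> with \<open>w < s < D / 2\<close>; the goal becomes \<open>t (s\<^sup>2 + D) \<le> D - 2 s\<close>, true for small \<open>t\<close>.\<close>
  define s where "s = (D / 2 + w) / 2"
  define g where "g = D - 2 * s"
  define t where "t = g / (s\<^sup>2 + D + g)"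
  have "0 < g" "w < s" "0 < D"
    using assms by (simp_all add: g_def s_def)
  then have den: "0 < s\<^sup>2 + D + g" by (simp add: add_nonneg_pos add_pos_pos)
  then have "0 < t" "t < 1"
    using \<open>0 < g\<close> \<open>0 < D\<close> by (simp_all add: t_def add_nonneg_pos)
  have "t * (s\<^sup>2 + D) \<le> g"
    using den \<open>0 < t\<close> \<open>0 < g\<close> by (simp add: t_def field_simps)
  then have "t * (2 * s + t * s\<^sup>2) \<le> t * ((1 - t) * D)"
    using \<open>0 < t\<close> by (intro mult_left_mono) (simp_all add: g_def algebra_simps)
  then have "2 * (t * s) + (t * s)\<^sup>2 \<le> t * (1 - t) * D"
    by (simp add: power2_eq_square algebra_simps)
  moreover have "t * w < t * s" using \<open>w < s\<close> \<open>0 < t\<close> by simp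
  ultimately show thesis using that \<open>0 < t\<close> \<open>t < 1\<close> by blast
qed

lemma cdual_convex_combination_minus_mem:
  fixes x y u :: "'a::euclidean_space"
  assumes "x \<in> cdual A" "y \<in> cdual A" "norm u = 1" "0 \<le> t" "t \<le> 1" "0 \<le> c"
    and "2 * c + c\<^sup>2 \<le> t * (1 - t) * (norm (x - y))\<^sup>2"
  shows "(1 - t) *\<^sub>R y + t *\<^sub>R x - c *\<^sub>R u \<in> cdual A"
  unfolding cdual_def
proof clarify
  fix a assume "a \<in> A"
  then have "norm (y - a) \<le> 1" "norm (x - a) \<le> 1"
    using assms(1,2) by (auto simp: cdual_def dist_norm norm_minus_commute)
  from norm_convex_combination_minus_sq_le[OF this assms(3-6)]
  have "(norm ((1 - t) *\<^sub>R y + t *\<^sub>R x - c *\<^sub>R u - a))\<^sup>2 \<le> 1"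
    using assms(7) by (simp add: algebra_simps)
  then show "dist a ((1 - t) *\<^sub>R y + t *\<^sub>R x - c *\<^sub>R u) \<le> 1"
    by (simp add: dist_norm norm_minus_commute power_le_one_iff)
qed

text \<open>
  If some \<open>x \<in> C\<close> lay outside the ball, a short step from \<open>y\<close> towards \<open>x\<close> followed by a
  shorter step against \<open>u\<close> would stay in \<open>C\<close> (the defining unit balls are uniformly convex,
  cf. \<open>norm_convex_combination_sq\<close>) while decreasing \<open>\<langle>u, \<cdot>\<rangle>\<close> below its minimum.
\<close>
lemma ball_body_subset_supporting_cball:
  fixes u y :: "'a::euclidean_space"
  assumes "C \<in> ball_bodies" "norm u = 1" "y \<in> C" "\<forall>x\<in>C. inner u y \<le> inner u x"
  shows "C \<subseteq> cball (y + u) 1"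
proof (rule ccontr)
  assume "\<not> C \<subseteq> cball (y + u) 1"
  then obtain x where x: "x \<in> C" "1 < dist (y + u) x" by (meson mem_cball not_le subsetI)
  obtain A where C: "C = cdual A" using assms(1) unfolding ball_bodies_def by blast
  define w where "w = inner u (x - y)"
  define D where "D = (norm (x - y))\<^sup>2"
  have "0 \<le> w" using assms(4) x(1) by (simp add: w_def inner_diff_right)
  have "dist (y + u) x = norm (u - (x - y))"
    by (simp add: dist_norm algebra_simps)
  then have "(dist (y + u) x)\<^sup>2 = D - 2 * w + 1"
    using dot_norm_neg[of u "x - y"] assms(2) by (simp add: w_def D_def)
  moreover have "1 < (dist (y + u) x)\<^sup>2" using x(2) by simp
  ultimately have "2 * w < D" by simp
  with \<open>0 \<le> w\<close> obtain t c where t: "0 < t" "t < 1" "t * w < c"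
    and c: "2 * c + c\<^sup>2 \<le> t * (1 - t) * D"
    by (rule exists_step_below_quadratic)
  define z where "z = (1 - t) *\<^sub>R y + t *\<^sub>R x - c *\<^sub>R u"
  have "0 \<le> c" using mult_nonneg_nonneg[of t w] t \<open>0 \<le> w\<close> by linarith
  then have "z \<in> C"
    using x(1) assms(2,3) t(1,2) c unfolding z_def C D_def
    by (intro cdual_convex_combination_minus_mem) simp_all
  moreover have "inner u u = 1"
    using assms(2) by (simp add: power2_norm_eq_inner[symmetric])
  then have "inner u z = inner u y + t * w - c"
    by (simp add: z_def w_def algebra_simps)
  ultimately show False using assms(4) t(3) by fastforce
qed

lemma mink_sum_scale_set_eq:
  "mink_sum (scale_set a A) (scale_set b B) = {a *\<^sub>R x + b *\<^sub>R y | x y. x \<in> A \<and> y \<in> B}"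
  by (auto simp: mink_sum_def scale_set_def)

lemma convex_scale_set: "convex A \<Longrightarrow> convex (scale_set c A)"
  unfolding scale_set_def by (rule convex_scaling)

lemma compact_scale_set:
  fixes A :: "'a::real_normed_vector set"
  shows "compact A \<Longrightarrow> compact (scale_set c A)"
  unfolding scale_set_def by (rule compact_scaling)

lemma convex_mink_sum:
  assumes "convex A" "convex B"
  shows "convex (mink_sum A B)"
proof -
  have "mink_sum A B = (\<Union>x\<in>A. \<Union>y\<in>B. {x + y})" by (auto simp: mink_sum_def)
  then show ?thesis using convex_sums[OF assms] by simp
qed

lemma compact_mink_sum:
  fixes A B :: "'a::real_normed_vector set"
  shows "compact A \<Longrightarrow> compact B \<Longrightarrow> compact (mink_sum A B)"
  unfolding mink_sum_def by (rule compact_sums)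

lemma separating_unit_vector:
  fixes z :: "'a::euclidean_space"
  assumes "convex S" "closed S" "S \<noteq> {}" "z \<notin> S"
  obtains u where "norm u = 1" "\<forall>x\<in>S. inner u z < inner u x"
proof -
  obtain a b where ab: "inner a z < b" "\<forall>x\<in>S. b < inner a x"
    using separating_hyperplane_closed_point[OF assms(1,2,4)] by blast
  then have "a \<noteq> 0" using assms(3) by fastforce
  then have "norm (a /\<^sub>R norm a) = 1" "\<forall>x\<in>S. inner (a /\<^sub>R norm a) z < inner (a /\<^sub>R norm a) x"
    using ab by (auto simp: divide_strict_right_mono)
  then show thesis by (rule that)
qed

lemma mink_comb_cdual_subset_cdual_mink_comb:
  fixes K T :: "'a::euclidean_space set"
  assumes "0 \<le> lam" "lam \<le> 1"
  shows "mink_sum (scale_set (1 - lam) (cdual K)) (scale_set lam (cdual T))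
     \<subseteq> cdual (mink_sum (scale_set (1 - lam) K) (scale_set lam T))"
proof (clarsimp simp: mink_sum_scale_set_eq)
  fix a b assume "a \<in> cdual K" "b \<in> cdual T"
  show "(1 - lam) *\<^sub>R a + lam *\<^sub>R b \<in> cdual {(1 - lam) *\<^sub>R k + lam *\<^sub>R t | k t. k \<in> K \<and> t \<in> T}"
  proof (clarsimp simp: cdual_def)
    fix k t assume "k \<in> K" "t \<in> T"
    then have "norm (k - a) \<le> 1" "norm (t - b) \<le> 1"
      using \<open>a \<in> cdual K\<close> \<open>b \<in> cdual T\<close> by (auto simp: cdual_def dist_norm)
    have "(1 - lam) *\<^sub>R k + lam *\<^sub>R t - ((1 - lam) *\<^sub>R a + lam *\<^sub>R b)
        = (1 - lam) *\<^sub>R (k - a) + lam *\<^sub>R (t - b)"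
      by (simp add: algebra_simps)
    also have "norm \<dots> \<le> (1 - lam) * norm (k - a) + lam * norm (t - b)"
      using norm_triangle_ineq[of "(1 - lam) *\<^sub>R (k - a)" "lam *\<^sub>R (t - b)"] assms by simp
    also have "\<dots> \<le> 1"
      using assms \<open>norm (k - a) \<le> 1\<close> \<open>norm (t - b) \<le> 1\<close> by (intro convex_bound_le) auto
    finally show "dist ((1 - lam) *\<^sub>R k + lam *\<^sub>R t) ((1 - lam) *\<^sub>R a + lam *\<^sub>R b) \<le> 1"
      by (simp add: dist_norm)
  qed
qed

lemma cdual_mink_comb_subset_mink_comb_cdual:
  fixes K T :: "'a::euclidean_space set"
  assumes "K \<in> ball_bodies" "K \<noteq> {}" "cdual K \<noteq> {}"
    and "T \<in> ball_bodies" "T \<noteq> {}" "cdual T \<noteq> {}"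
    and "0 \<le> lam" "lam \<le> 1"
  shows "cdual (mink_sum (scale_set (1 - lam) K) (scale_set lam T))
     \<subseteq> mink_sum (scale_set (1 - lam) (cdual K)) (scale_set lam (cdual T))"
    (is "cdual ?M \<subseteq> ?N")
proof
  fix z assume z: "z \<in> cdual ?M"
  show "z \<in> ?N"
  proof (rule ccontr)
    assume "z \<notin> ?N"
    have "compact (cdual K)" "compact (cdual T)"
      using assms(2,5) by (simp_all add: compact_cdual)
    have "convex ?N"
      by (simp add: convex_mink_sum convex_scale_set convex_cdual)
    moreover have "closed ?N"
      using \<open>compact (cdual K)\<close> \<open>compact (cdual T)\<close>
      by (simp add: compact_imp_closed compact_mink_sum compact_scale_set)
    moreover have "?N \<noteq> {}"
      using assms(3,6) by (auto simp: mink_sum_scale_set_eq)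
    ultimately obtain u where u: "norm u = 1" "\<forall>x\<in>?N. inner u z < inner u x"
      using \<open>z \<notin> ?N\<close> by (rule separating_unit_vector)
    have "continuous_on S (inner u)" for S
      by (intro continuous_intros)
    then obtain y1 y2 where y1: "y1 \<in> cdual K" "\<forall>y\<in>cdual K. inner u y1 \<le> inner u y"
      and y2: "y2 \<in> cdual T" "\<forall>y\<in>cdual T. inner u y2 \<le> inner u y"
      using continuous_attains_inf \<open>compact (cdual K)\<close> \<open>compact (cdual T)\<close> assms(3,6)
      by metis
    have "cdual K \<subseteq> cball (y1 + u) 1" "cdual T \<subseteq> cball (y2 + u) 1"
      using ball_body_subset_supporting_cball[OF cdual_in_ball_bodies u(1)] y1 y2 by simp_all
    then have "y1 + u \<in> K" "y2 + u \<in> T"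
      using cdual_cdual_ball_body[OF assms(1)] cdual_cdual_ball_body[OF assms(4)]
      by (simp_all add: mem_cdual_iff_subset_cball[symmetric])
    then have "(1 - lam) *\<^sub>R (y1 + u) + lam *\<^sub>R (y2 + u) \<in> ?M"
      by (auto simp: mink_sum_scale_set_eq)
    then have "dist ((1 - lam) *\<^sub>R (y1 + u) + lam *\<^sub>R (y2 + u)) z \<le> 1"
      using z by (auto simp: cdual_def)
    moreover have "inner u ((1 - lam) *\<^sub>R (y1 + u) + lam *\<^sub>R (y2 + u) - z)
        \<le> norm ((1 - lam) *\<^sub>R (y1 + u) + lam *\<^sub>R (y2 + u) - z)"
      using Cauchy_Schwarz_ineq2 u(1) by (metis abs_le_D1 mult_1)
    moreover have "inner u u = 1"
      using u(1) by (simp add: power2_norm_eq_inner[symmetric])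
    then have "inner u ((1 - lam) *\<^sub>R (y1 + u) + lam *\<^sub>R (y2 + u) - z)
        = inner u ((1 - lam) *\<^sub>R y1 + lam *\<^sub>R y2) - inner u z + 1"
      by (simp add: algebra_simps)
    moreover have "(1 - lam) *\<^sub>R y1 + lam *\<^sub>R y2 \<in> ?N"
      using y1(1) y2(1) by (auto simp: mink_sum_scale_set_eq)
    ultimately show False using u(2) by (fastforce simp: dist_norm)
  qed
qed

lemma cdual_mink_comb:
  fixes K T :: "'a::euclidean_space set"
  assumes "K \<in> ball_bodies" "K \<noteq> {}" "cdual K \<noteq> {}"
    and "T \<in> ball_bodies" "T \<noteq> {}" "cdual T \<noteq> {}"
    and "0 \<le> lam" "lam \<le> 1"
  shows "cdual (mink_sum (scale_set (1 - lam) K) (scale_set lam T))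
     = mink_sum (scale_set (1 - lam) (cdual K)) (scale_set lam (cdual T))"
  using cdual_mink_comb_subset_mink_comb_cdual[OF assms] mink_comb_cdual_subset_cdual_mink_comb[OF assms(7,8)]
  by (rule subset_antisym)

theorem theorem1p19:
  fixes K T :: "'a::euclidean_space set" and lam :: real
  assumes "K \<in> ball_bodies" "K \<noteq> {}" "K \<noteq> UNIV"
    and "T \<in> ball_bodies" "T \<noteq> {}" "T \<noteq> UNIV"
    and "0 < lam" "lam < 1"
  shows "mink_sum (scale_set (1 - lam) K) (scale_set lam T) \<in> ball_bodies
    \<and> cdual (mink_sum (scale_set (1 - lam) K) (scale_set lam T))
        = mink_sum (scale_set (1 - lam) (cdual K)) (scale_set lam (cdual T))"
proof -
  have lam: "0 \<le> lam" "lam \<le> 1" using assms(7,8) by simp_all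
  have duals_nonempty: "cdual K \<noteq> {}" "cdual T \<noteq> {}"
    using assms cdual_ball_body_nonempty by blast+
  have bidual: "cdual (cdual K) = K" "cdual (cdual T) = T"
    using assms(1,4) by (simp_all add: cdual_cdual_ball_body)
  have "cdual (mink_sum (scale_set (1 - lam) (cdual K)) (scale_set lam (cdual T)))
      = mink_sum (scale_set (1 - lam) K) (scale_set lam T)"
    using cdual_mink_comb[OF cdual_in_ball_bodies _ _ cdual_in_ball_bodies _ _ lam, of K T]
      duals_nonempty bidual assms(2,5) by simp
  then have "mink_sum (scale_set (1 - lam) K) (scale_set lam T) \<in> ball_bodies"
    by (metis cdual_in_ball_bodies)
  moreover have "cdual (mink_sum (scale_set (1 - lam) K) (scale_set lam T))
      = mink_sum (scale_set (1 - lam) (cdual K)) (scale_set lam (cdual T))"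
    using cdual_mink_comb[OF assms(1,2) _ assms(4,5) _ lam] duals_nonempty by blast
  ultimately show ?thesis ..
qed

end
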